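(* Let $(R,B)$ be an EIC problem with problem graph $G$, and let $\mathcal{A}_{(R,B)}$ be the image of its column repetition function. Then the minimum length $(C)_{(R,B)}$ of a centralized linear broadcast solution to $(R,B)$ equals $\mathrm{rminrk}_2(G,\mathcal{A}_{(R,B)})$, the minimum of $\mathrm{rk}_2(A')$ over all $A'\in\mathcal{A}_{(R,B)}$ that fit $G$.
   Context: Let $n,m$ be positive integers. An EIC problem is a pair $(R,B)$ of matrices in $\mathbb{F}_2^{n\times m}$ with disjoint supports; node $u$ needs block $a$ if $R_{ua}=1$ and has block $a$ if $B_{ua}=1$. Requirement pairs: $P=\{(u,a): R_{ua}=1\}$. The problem graph $G=(V,E)$ is the directed graph with vertices $V=\{v_{(u,a)}:(u,a)\in P\}$ and an edge from $v_{(u,a)}$ to $v_{(w,b)}$ iff $B_{ub}=1$ or $a=b$. $B_u$ is the $u$-th row of $B$, $\mathrm{diag}(B_u)$ the diagonal matrix with $B_u$ on the diagonal, $\boldsymbol e_a$ the $a$-th standard basis row vector of $\mathbb{F}_2^m$. A matrix $A'\in\mathbb{F}_2^{|V|\times|V|}$ (indexed by $V$) fits $G$ if its diagonal entries are all $1$ and $A'_{xy}=0$ whenever $x\ne y$ and $(x,y)\notin E$. The column repetition function $\phi_{(R,B)}:\mathbb{F}_2^{|V|\times m}\to\mathbb{F}_2^{|V|\times|V|}$ sends $A$ to the matrix whose column indexed by $v_{(u,a)}$ is the $a$-th column of $A$; $\mathcal{A}_{(R,B)}$ is its image. A centralized linear broadcast solution is $\beta\in\mathbb{F}_2^{h\times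 m}$ such that for every $(u,a)\in P$ there is $\boldsymbol\alpha\in\mathbb{F}_2^{h+m}$ with $\boldsymbol e_a=\boldsymbol\alpha\cdot\left[\begin{smallmatrix}\beta\\ \mathrm{diag}(B_u)\end{smallmatrix}\right]$; its length is $h$, and $(C)_{(R,B)}$ denotes the minimum length. *)

theory Defs
  imports "Jordan_Normal_Form.DL_Rank" "HOL-Library.Z2"
begin

text \<open>Matrices over F_2 are Jordan_Normal_Form matrices with entries in the two-element
  field bit (HOL-Library.Z2). Nodes are indexed 0..<n, blocks 0..<m.\<close>

definition EIC_problem :: "nat \<Rightarrow> nat \<Rightarrow> bit mat \<Rightarrow> bit mat \<Rightarrow> bool" where
  "EIC_problem n m R B \<longleftrightarrow> R \<in> carrier_mat n m \<and> B \<in> carrier_mat n m \<and>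
     (\<forall>u<n. \<forall>a<m. \<not> (R $$ (u,a) = 1 \<and> B $$ (u,a) = 1))"

text \<open>Requirement pairs P, enumerated in a fixed (lexicographic) order; position i in
  this list is the index of vertex v_(u,a) of the problem graph.\<close>
definition req_pairs :: "bit mat \<Rightarrow> (nat \<times> nat) list" where
  "req_pairs R = [(u,a). u \<leftarrow> [0..<dim_row R], a \<leftarrow> [0..<dim_col R], R $$ (u,a) = 1]"

definition pg_edge :: "bit mat \<Rightarrow> nat \<times> nat \<Rightarrow> nat \<times> nat \<Rightarrow> bool" where
  "pg_edge B x y \<longleftrightarrow> B $$ (fst x, snd y) = 1 \<or> snd x = snd y"

definition fits :: "bit mat \<Rightarrow> bit mat \<Rightarrow> bit mat \<Rightarrow> bool" where
  "fits R B A' \<longleftrightarrow> (let ps = req_pairs R; k = length ps in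
     A' \<in> carrier_mat k k \<and> (\<forall>i<k. A' $$ (i,i) = 1) \<and>
     (\<forall>i<k. \<forall>j<k. i \<noteq> j \<and> \<not> pg_edge B (ps ! i) (ps ! j) \<longrightarrow> A' $$ (i,j) = 0))"

definition col_rep :: "bit mat \<Rightarrow> bit mat \<Rightarrow> bit mat" where
  "col_rep R A = (let ps = req_pairs R; k = length ps in
     mat k k (\<lambda>(i,j). A $$ (i, snd (ps ! j))))"

definition col_rep_image :: "bit mat \<Rightarrow> bit mat set" where
  "col_rep_image R = {col_rep R A | A. A \<in> carrier_mat (length (req_pairs R)) (dim_col R)}"

definition rk2 :: "bit mat \<Rightarrow> nat" where
  "rk2 A = vec_space.rank (dim_row A) A"

definition rminrk :: "bit mat \<Rightarrow> bit mat \<Rightarrow> nat" where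
  "rminrk R B = (LEAST r. \<exists>A' \<in> col_rep_image R. fits R B A' \<and> rk2 A' = r)"

definition diag_row :: "bit mat \<Rightarrow> nat \<Rightarrow> bit mat" where
  "diag_row B u = mat (dim_col B) (dim_col B) (\<lambda>(i,j). if i = j then B $$ (u,i) else 0)"

text \<open>beta (h x m) is a centralized linear broadcast solution: for each requirement pair
  (u,a) some alpha in F_2^(h+m) has alpha * [beta; diag(B_u)] = e_a (row vectors).\<close>
definition cl_broadcast_solution :: "bit mat \<Rightarrow> bit mat \<Rightarrow> nat \<Rightarrow> bit mat \<Rightarrow> bool" where
  "cl_broadcast_solution R B h \<beta> \<longleftrightarrow> \<beta> \<in> carrier_mat h (dim_col R) \<and>
     (\<forall>(u,a) \<in> set (req_pairs R). \<exists>\<alpha> \<in> carrier_vec (h + dim_col R).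
        transpose_mat (\<beta> @\<^sub>r diag_row B u) *\<^sub>v \<alpha> = unit_vec (dim_col R) a)"

definition min_broadcast_length :: "bit mat \<Rightarrow> bit mat \<Rightarrow> nat" where
  "min_broadcast_length R B = (LEAST h. \<exists>\<beta>. cl_broadcast_solution R B h \<beta>)"

end

theory Submission
  imports Defs
begin

text \<open>A broadcast \<beta> of length h lets node u decode block a iff some \<gamma> \<in> F_2^h makes
  \<beta>^T \<gamma> agree with e_a on the blocks u does not have: the side-information part of \<alpha>
  repairs every other coordinate. Stacking these \<gamma> into \<Gamma> turns a solution into a decoding
  matrix \<Gamma> \<beta>; repeating its columns gives a matrix fitting G, of rank at most h since it
  factors through \<Gamma>. Conversely, a fitting matrix of rank r factors as \<Gamma> X with \<Gamma> of width r,
  and taking as column b of \<beta> a column of X belonging to a requirement for block b gives a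
  solution of length r.\<close>

context vec_space begin

lemma rank_mult_le:
  assumes G: "G \<in> carrier_mat n h" and X: "X \<in> carrier_mat h nc"
  shows "rank (G * X) \<le> h"
proof -
  have GX: "G * X \<in> carrier_mat n nc" using G X by simp
  have cG: "set (cols G) \<subseteq> carrier_vec n" using G cols_dim by blast
  have sub: "set (cols (G * X)) \<subseteq> span (set (cols G))"
  proof
    fix v assume "v \<in> set (cols (G * X))"
    then obtain j where j: "j < nc" and "v = col (G * X) j"
      using GX by (metis carrier_matD(2) cols_length cols_nth in_set_conv_nth)
    then have v: "v = G *\<^sub>v col X j" using col_mult2[OF G X j] by (simp only:)
    have "G *\<^sub>v col X j \<in> col_space G"
      unfolding col_space_eq[OF G] using G X j by (intro CollectI conjI bexI[of _ "col X j"]) auto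
    then show "v \<in> span (set (cols G))" unfolding v col_space_def .
  qed
  have sG: "subspace class_ring (span (set (cols G))) V" using span_is_subspace cG by auto
  have "rank (G * X) \<le> vectorspace.dim class_ring (vs (span (set (cols G))))"
    unfolding rank_def
    using vectorspace.subspace_dim[OF subspace_is_vs[OF sG]
        nested_subspaces[OF sG span_is_subspace span_subsetI[OF cG sub]] fin_dim_span_cols[OF G]]
      fin_dim_span_cols[OF GX] GX cols_dim[of "G * X"] by auto
  also have "\<dots> = rank G" unfolding rank_def by simp
  also have "\<dots> \<le> h" using rank_le_nc[OF G] .
  finally show ?thesis .
qed

lemma cols_in_span_of_rank_cols:
  assumes A: "A \<in> carrier_mat n nc"
  obtains G where "G \<in> carrier_mat n (rank A)" "set (cols A) \<subseteq> span (set (cols G))"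
proof -
  obtain S where max: "maximal S (\<lambda>T. T \<subseteq> set (cols A) \<and> lin_indpt T)"
    using maximal_exists[of "\<lambda>T. T \<subseteq> set (cols A) \<and> lin_indpt T" "card (set (cols A))" "{}"]
    by (meson List.finite_set card_mono empty_iff empty_subsetI finite_lin_indpt2 rev_finite_subset)
  have SA: "S \<subseteq> set (cols A)" "lin_indpt S" using max unfolding maximal_def by auto
  have cA: "set (cols A) \<subseteq> carrier_vec n" using A cols_dim by blast
  then have cS: "S \<subseteq> carrier_vec n" using SA by auto
  have "set (cols A) \<subseteq> span S"
  proof
    fix s assume s: "s \<in> set (cols A)"
    show "s \<in> span S"
    proof (rule ccontr)
      assume ns: "s \<notin> span S"
      have sC: "s \<in> carrier_vec n" using s cA by blast
      have "s \<notin> S" using ns span_mem[OF cS] by blast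
      then have "lin_indpt (S \<union> {s})"
        using lin_dep_iff_in_span[OF cS SA(2) sC] ns by blast
      then have "lin_indpt (insert s S)" by simp
      moreover have "insert s S \<subseteq> set (cols A)" using s SA(1) by simp
      moreover have "\<forall>T. S \<subseteq> T \<and> T \<subseteq> set (cols A) \<and> lin_indpt T \<longrightarrow> T = S"
        using max by (simp add: maximal_def)
      ultimately have "insert s S = S" by (simp add: subset_insertI)
      then show False using \<open>s \<notin> S\<close> by blast
    qed
  qed
  moreover have "finite S" using SA(1) by (rule finite_subset) simp
  then obtain xs where xs: "set xs = S" "distinct xs" using finite_distinct_list by blast
  moreover have "mat_of_cols n xs \<in> carrier_mat n (rank A)"
    using rank_card_indpt[OF A max] distinct_card[OF xs(2)] xs(1) by simp
  ultimately show thesis using that[of "mat_of_cols n xs"] cS by simp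
qed

lemma rank_factorization:
  assumes A: "A \<in> carrier_mat n nc"
  obtains G X where "G \<in> carrier_mat n (rank A)" "X \<in> carrier_mat (rank A) nc" "A = G * X"
proof -
  obtain G where G: "G \<in> carrier_mat n (rank A)" and sub: "set (cols A) \<subseteq> span (set (cols G))"
    using cols_in_span_of_rank_cols[OF A] .
  have "\<exists>x \<in> carrier_vec (rank A). G *\<^sub>v x = col A j" if "j < nc" for j
  proof -
    have "col A j \<in> col_space G" using sub A that unfolding col_space_def by (auto simp: cols_def)
    then show ?thesis using col_space_eq[OF G] G by auto
  qed
  then obtain x where x: "\<And>j. j < nc \<Longrightarrow> x j \<in> carrier_vec (rank A) \<and> G *\<^sub>v x j = col A j"
    by metis
  define X where "X = mat_of_cols (rank A) (map x [0..<nc])"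
  have X: "X \<in> carrier_mat (rank A) nc"
    unfolding X_def using mat_of_cols_carrier[of "rank A" "map x [0..<nc]"] by simp
  have "col A j = col (G * X) j" if j: "j < nc" for j
  proof -
    have "col X j = x j" unfolding X_def using j x by simp
    have "col (G * X) j = G *\<^sub>v col X j" by (rule col_mult2[OF G X j])
    also have "\<dots> = G *\<^sub>v x j" unfolding \<open>col X j = x j\<close> ..
    also have "\<dots> = col A j" using x[OF j] by blast
    finally show ?thesis by (rule sym)
  qed
  then have "A = G * X" by (intro mat_col_eqI) (use A G X in auto)
  with G X that show thesis by blast
qed

end

lemma bit_add_self_cancel: "(x::bit) + (y + x) = y"
proof -
  have "x + (y + x) = (x + x) + y" by (simp only: add.commute[of y x] add.assoc)
  also have "x + x = 0" by (metis bit_2_eq_0 mult_2 mult_zero_left)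
  finally show ?thesis by simp
qed

lemma set_req_pairs:
  "set (req_pairs R) = {(u,a). u < dim_row R \<and> a < dim_col R \<and> R $$ (u,a) = 1}"
  unfolding req_pairs_def by auto

lemma req_pairs_nth:
  assumes "i < length (req_pairs R)"
  shows "fst (req_pairs R ! i) < dim_row R" "snd (req_pairs R ! i) < dim_col R"
    "R $$ (req_pairs R ! i) = 1"
  using nth_mem[OF assms] unfolding set_req_pairs by auto

lemma transpose_append_rows_mult_append_vec:
  assumes A1: "A1 \<in> carrier_mat nr1 nc" and A2: "A2 \<in> carrier_mat nr2 nc"
    and y1: "y1 \<in> carrier_vec nr1" and y2: "y2 \<in> carrier_vec nr2"
  shows "(A1 @\<^sub>r A2)\<^sup>T *\<^sub>v (y1 @\<^sub>v y2) = A1\<^sup>T *\<^sub>v y1 + A2\<^sup>T *\<^sub>v y2"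
proof (rule eq_vecI)
  fix b assume "b < dim_vec (A1\<^sup>T *\<^sub>v y1 + A2\<^sup>T *\<^sub>v y2)"
  then have b: "b < nc" using A1 A2 by simp
  have A: "A1 @\<^sub>r A2 \<in> carrier_mat (nr1 + nr2) nc" using A1 A2 by blast
  have "col (A1 @\<^sub>r A2) b = col A1 b @\<^sub>v col A2 b"
    using A1 A2 b by (intro eq_vecI) (auto simp: append_rows_def)
  then have "((A1 @\<^sub>r A2)\<^sup>T *\<^sub>v (y1 @\<^sub>v y2)) $ b = col A1 b \<bullet> y1 + col A2 b \<bullet> y2"
    using carrier_matD[OF A] b A1 A2 y1 y2 by (simp add: scalar_prod_append[of _ nr1 _ nr2])
  then show "((A1 @\<^sub>r A2)\<^sup>T *\<^sub>v (y1 @\<^sub>v y2)) $ b = (A1\<^sup>T *\<^sub>v y1 + A2\<^sup>T *\<^sub>v y2) $ b"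
    using A1 A2 b by simp
qed (use A1 A2 carrier_matD(2)[OF carrier_append_rows[OF A1 A2]] in simp)

lemma transpose_diag_row_mult_vec:
  assumes B: "dim_col B = m" and z: "z \<in> carrier_vec m"
  shows "(diag_row B u)\<^sup>T *\<^sub>v z = vec m (\<lambda>b. B $$ (u,b) * z $ b)"
proof (rule eq_vecI)
  fix b assume "b < dim_vec (vec m (\<lambda>b. B $$ (u,b) * z $ b))"
  then have b: "b < m" by simp
  have D: "diag_row B u \<in> carrier_mat m m" using B by (simp add: diag_row_def)
  have "col (diag_row B u) b = B $$ (u,b) \<cdot>\<^sub>v unit_vec m b"
    using B b by (intro eq_vecI) (auto simp: diag_row_def)
  then have "((diag_row B u)\<^sup>T *\<^sub>v z) $ b = (B $$ (u,b) \<cdot>\<^sub>v unit_vec m b) \<bullet> z"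
    using carrier_matD[OF D] b by simp
  then show "((diag_row B u)\<^sup>T *\<^sub>v z) $ b = vec m (\<lambda>b. B $$ (u,b) * z $ b) $ b"
    using b z by simp
qed (simp add: B diag_row_def)

lemma broadcast_mult_vec:
  assumes B: "dim_col B = m" and \<beta>: "\<beta> \<in> carrier_mat h m"
    and \<gamma>: "\<gamma> \<in> carrier_vec h" and z: "z \<in> carrier_vec m"
  shows "(\<beta> @\<^sub>r diag_row B u)\<^sup>T *\<^sub>v (\<gamma> @\<^sub>v z) = \<beta>\<^sup>T *\<^sub>v \<gamma> + vec m (\<lambda>b. B $$ (u,b) * z $ b)"
proof -
  have "diag_row B u \<in> carrier_mat m m" using B by (simp add: diag_row_def)
  then show ?thesis
    using transpose_append_rows_mult_append_vec[OF \<beta> _ \<gamma> z] transpose_diag_row_mult_vec[OF B z]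
    by simp
qed

lemma recovers_block_iff:
  assumes B: "dim_col B = m" and \<beta>: "\<beta> \<in> carrier_mat h m"
  shows "(\<exists>\<alpha> \<in> carrier_vec (h + m). (\<beta> @\<^sub>r diag_row B u)\<^sup>T *\<^sub>v \<alpha> = unit_vec m a) \<longleftrightarrow>
         (\<exists>\<gamma> \<in> carrier_vec h. \<forall>b < m. B $$ (u,b) = 0 \<longrightarrow> (\<beta>\<^sup>T *\<^sub>v \<gamma>) $ b = unit_vec m a $ b)"
    (is "?sol \<longleftrightarrow> ?dec")
proof
  assume ?sol
  then obtain \<alpha> where \<alpha>: "\<alpha> \<in> carrier_vec (h + m)"
    and eq: "(\<beta> @\<^sub>r diag_row B u)\<^sup>T *\<^sub>v \<alpha> = unit_vec m a" by blast
  let ?\<gamma> = "vec_first \<alpha> h"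
  have sum: "\<beta>\<^sup>T *\<^sub>v ?\<gamma> + vec m (\<lambda>b. B $$ (u,b) * vec_last \<alpha> m $ b) = unit_vec m a"
    using broadcast_mult_vec[OF B \<beta>, of ?\<gamma> "vec_last \<alpha> m" u] vec_first_last_append[OF \<alpha>] eq
    by simp
  show ?dec
  proof (intro bexI[of _ ?\<gamma>] allI impI)
    fix b assume b: "b < m" and "B $$ (u,b) = 0"
    then have "(\<beta>\<^sup>T *\<^sub>v ?\<gamma> + vec m (\<lambda>b. B $$ (u,b) * vec_last \<alpha> m $ b)) $ b = (\<beta>\<^sup>T *\<^sub>v ?\<gamma>) $ b"
      using \<beta> by simp
    then show "(\<beta>\<^sup>T *\<^sub>v ?\<gamma>) $ b = unit_vec m a $ b" using sum by simp
  qed simp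
next
  assume ?dec
  then obtain \<gamma> where \<gamma>: "\<gamma> \<in> carrier_vec h"
    and dec: "\<And>b. b < m \<Longrightarrow> B $$ (u,b) = 0 \<Longrightarrow> (\<beta>\<^sup>T *\<^sub>v \<gamma>) $ b = unit_vec m a $ b"
    by blast
  \<comment> \<open>on the blocks node u has, its side information corrects whatever the broadcast yields\<close>
  define z where "z = unit_vec m a + \<beta>\<^sup>T *\<^sub>v \<gamma>"
  have z: "z \<in> carrier_vec m" unfolding z_def using \<beta> \<gamma> by (intro add_carrier_vec) auto
  have "(\<beta> @\<^sub>r diag_row B u)\<^sup>T *\<^sub>v (\<gamma> @\<^sub>v z) = unit_vec m a"
    unfolding broadcast_mult_vec[OF B \<beta> \<gamma> z]
  proof (rule eq_vecI)
    fix b assume "b < dim_vec (unit_vec m a)"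
    then have b: "b < m" by simp
    have zb: "z $ b = unit_vec m a $ b + (\<beta>\<^sup>T *\<^sub>v \<gamma>) $ b" unfolding z_def using \<beta> b by simp
    have "(\<beta>\<^sup>T *\<^sub>v \<gamma>) $ b + B $$ (u,b) * z $ b = unit_vec m a $ b"
    proof (cases "B $$ (u,b) = 0")
      case False
      then have "B $$ (u,b) = 1" by simp
      then show ?thesis by (simp only: zb mult_1_left bit_add_self_cancel)
    qed (simp add: dec[OF b])
    then show "(\<beta>\<^sup>T *\<^sub>v \<gamma> + vec m (\<lambda>b. B $$ (u,b) * z $ b)) $ b = unit_vec m a $ b"
      using \<beta> b by simp
  qed (use \<beta> in simp)
  with \<gamma> z show ?sol by (intro bexI[of _ "\<gamma> @\<^sub>v z"]) auto
qed

lemma choice_mat_rows: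
  "(\<forall>i < k. \<exists>\<gamma> \<in> carrier_vec h. P i \<gamma>) \<longleftrightarrow> (\<exists>\<Gamma> \<in> carrier_mat k h. \<forall>i < k. P i (row \<Gamma> i))"
proof
  assume "\<forall>i < k. \<exists>\<gamma> \<in> carrier_vec h. P i \<gamma>"
  then obtain \<gamma> where \<gamma>: "\<And>i. i < k \<Longrightarrow> \<gamma> i \<in> carrier_vec h \<and> P i (\<gamma> i)" by metis
  have "row (mat k h (\<lambda>(i,l). \<gamma> i $ l)) i = \<gamma> i" if "i < k" for i
    using \<gamma>[OF that] that by (intro eq_vecI) auto
  with \<gamma> show "\<exists>\<Gamma> \<in> carrier_mat k h. \<forall>i < k. P i (row \<Gamma> i)"
    by (intro bexI[of _ "mat k h (\<lambda>(i,l). \<gamma> i $ l)"]) auto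
qed auto

lemma cl_broadcast_solution_nth_iff:
  "cl_broadcast_solution R B h \<beta> \<longleftrightarrow> \<beta> \<in> carrier_mat h (dim_col R) \<and>
     (\<forall>i < length (req_pairs R). \<exists>\<alpha> \<in> carrier_vec (h + dim_col R).
        (\<beta> @\<^sub>r diag_row B (fst (req_pairs R ! i)))\<^sup>T *\<^sub>v \<alpha> = unit_vec (dim_col R) (snd (req_pairs R ! i)))"
  unfolding cl_broadcast_solution_def by (simp add: all_set_conv_all_nth split_beta)

text \<open>Row i of a decoding matrix is what the node of the i-th requirement pair (u,a) computes
  from the broadcast: it must agree with e_a on every block that u does not have.\<close>
definition decoding_matrix :: "bit mat \<Rightarrow> bit mat \<Rightarrow> bit mat \<Rightarrow> bool" where
  "decoding_matrix R B M \<longleftrightarrow> (\<forall>i < length (req_pairs R). \<forall>b < dim_col R.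
     B $$ (fst (req_pairs R ! i), b) = 0 \<longrightarrow> M $$ (i,b) = unit_vec (dim_col R) (snd (req_pairs R ! i)) $ b)"

lemma cl_broadcast_solution_iff_decoding_matrix:
  assumes R: "dim_col R = m" and B: "dim_col B = m" and \<beta>: "\<beta> \<in> carrier_mat h m"
  shows "cl_broadcast_solution R B h \<beta> \<longleftrightarrow>
    (\<exists>\<Gamma> \<in> carrier_mat (length (req_pairs R)) h. decoding_matrix R B (\<Gamma> * \<beta>))"
proof -
  let ?k = "length (req_pairs R)"
  let ?u = "\<lambda>i. fst (req_pairs R ! i)" and ?a = "\<lambda>i. snd (req_pairs R ! i)"
  have entry: "(\<Gamma> * \<beta>) $$ (i,b) = (\<beta>\<^sup>T *\<^sub>v row \<Gamma> i) $ b"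
    if "\<Gamma> \<in> carrier_mat ?k h" "i < ?k" "b < m" for \<Gamma> :: "bit mat" and i b
    using that \<beta> by (simp add: comm_scalar_prod[of _ h])
  have "cl_broadcast_solution R B h \<beta> \<longleftrightarrow> (\<forall>i < ?k. \<exists>\<gamma> \<in> carrier_vec h.
      \<forall>b < m. B $$ (?u i, b) = 0 \<longrightarrow> (\<beta>\<^sup>T *\<^sub>v \<gamma>) $ b = unit_vec m (?a i) $ b)"
    unfolding cl_broadcast_solution_nth_iff R recovers_block_iff[OF B \<beta>] using \<beta> by simp
  also have "\<dots> \<longleftrightarrow> (\<exists>\<Gamma> \<in> carrier_mat ?k h. \<forall>i < ?k.
      \<forall>b < m. B $$ (?u i, b) = 0 \<longrightarrow> (\<beta>\<^sup>T *\<^sub>v row \<Gamma> i) $ b = unit_vec m (?a i) $ b)"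
    by (rule choice_mat_rows)
  also have "\<dots> \<longleftrightarrow> (\<exists>\<Gamma> \<in> carrier_mat ?k h. decoding_matrix R B (\<Gamma> * \<beta>))"
    unfolding decoding_matrix_def R using entry by (intro bex_cong refl) auto
  finally show ?thesis .
qed

lemma cl_broadcast_solution_one_mat:
  assumes R: "dim_col R = m" and B: "dim_col B = m"
  shows "cl_broadcast_solution R B m (1\<^sub>m m)"
proof -
  define \<Gamma> :: "bit mat"
    where "\<Gamma> = mat (length (req_pairs R)) m (\<lambda>(i,b). unit_vec m (snd (req_pairs R ! i)) $ b)"
  have \<Gamma>: "\<Gamma> \<in> carrier_mat (length (req_pairs R)) m" unfolding \<Gamma>_def by simp
  have "decoding_matrix R B (\<Gamma> * 1\<^sub>m m)"
    unfolding right_mult_one_mat[OF \<Gamma>] decoding_matrix_def R by (simp add: \<Gamma>_def)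
  with \<Gamma> show ?thesis by (auto simp: cl_broadcast_solution_iff_decoding_matrix[OF R B])
qed

lemma col_rep_index:
  "i < length (req_pairs R) \<Longrightarrow> j < length (req_pairs R) \<Longrightarrow>
   col_rep R A $$ (i,j) = A $$ (i, snd (req_pairs R ! j))"
  unfolding col_rep_def Let_def by simp

lemma col_rep_carrier: "col_rep R A \<in> carrier_mat (length (req_pairs R)) (length (req_pairs R))"
  unfolding col_rep_def Let_def by simp

lemma col_rep_mult:
  assumes \<Gamma>: "\<Gamma> \<in> carrier_mat (length (req_pairs R)) h" and \<beta>: "\<beta> \<in> carrier_mat h (dim_col R)"
  shows "col_rep R (\<Gamma> * \<beta>) = \<Gamma> * mat h (length (req_pairs R)) (\<lambda>(l,j). \<beta> $$ (l, snd (req_pairs R ! j)))"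
    (is "_ = \<Gamma> * ?X")
proof (rule eq_matI)
  fix i j assume i: "i < dim_row (\<Gamma> * ?X)" and j: "j < dim_col (\<Gamma> * ?X)"
  have "col \<beta> (snd (req_pairs R ! j)) = col ?X j"
    using \<beta> j req_pairs_nth(2)[of j R] by (intro eq_vecI) auto
  then show "col_rep R (\<Gamma> * \<beta>) $$ (i,j) = (\<Gamma> * ?X) $$ (i,j)"
    using \<Gamma> \<beta> i j req_pairs_nth(2)[of j R] by (simp add: col_rep_index)
qed (use \<Gamma> in \<open>simp_all add: col_rep_def Let_def\<close>)

lemma fits_col_rep_if_decoding_matrix:
  assumes EIC: "EIC_problem n m R B" and dec: "decoding_matrix R B M"
  shows "fits R B (col_rep R M)"
proof -
  let ?ps = "req_pairs R"
  have R: "dim_row R = n" "dim_col R = m" and B: "B \<in> carrier_mat n m"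
    and disj: "\<And>u a. u < n \<Longrightarrow> a < m \<Longrightarrow> \<not> (R $$ (u,a) = 1 \<and> B $$ (u,a) = 1)"
    using EIC unfolding EIC_problem_def by auto
  have entry: "col_rep R M $$ (i,j) = unit_vec m (snd (?ps ! i)) $ snd (?ps ! j)"
    if "i < length ?ps" "j < length ?ps" "B $$ (fst (?ps ! i), snd (?ps ! j)) = 0" for i j
    using dec that req_pairs_nth[of j R] R unfolding decoding_matrix_def by (simp add: col_rep_index)
  have "B $$ (fst (?ps ! i), snd (?ps ! i)) = 0" if "i < length ?ps" for i
    using disj[of "fst (?ps ! i)" "snd (?ps ! i)"] req_pairs_nth[OF that] R by auto
  then show ?thesis
    unfolding fits_def Let_def pg_edge_def using col_rep_carrier entry req_pairs_nth(2) R by auto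
qed

lemma decoding_matrix_if_fits_col_rep:
  assumes fit: "fits R B (col_rep R A)"
  shows "decoding_matrix R B (mat (length (req_pairs R)) (dim_col R)
    (\<lambda>(i,b). if \<exists>j < length (req_pairs R). snd (req_pairs R ! j) = b then A $$ (i,b) else 0))"
  unfolding decoding_matrix_def
proof (intro allI impI)
  let ?ps = "req_pairs R" and ?m = "dim_col R"
  fix i b assume i: "i < length ?ps" and b: "b < ?m" and side: "B $$ (fst (?ps ! i), b) = 0"
  have a: "snd (?ps ! i) < ?m" using req_pairs_nth(2)[OF i] .
  have diag: "A $$ (i, snd (?ps ! i)) = 1" and
    off: "\<And>j. j < length ?ps \<Longrightarrow> i \<noteq> j \<Longrightarrow> \<not> pg_edge B (?ps ! i) (?ps ! j) \<Longrightarrow> A $$ (i, snd (?ps ! j)) = 0"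
    using fit i unfolding fits_def Let_def by (auto simp: col_rep_index)
  show "mat (length ?ps) ?m (\<lambda>(i,b). if \<exists>j < length ?ps. snd (?ps ! j) = b then A $$ (i,b) else 0) $$ (i,b)
      = unit_vec ?m (snd (?ps ! i)) $ b"
  proof (cases "\<exists>j < length ?ps. snd (?ps ! j) = b")
    case True
    then obtain j where j: "j < length ?ps" and bj: "b = snd (?ps ! j)" by auto
    show ?thesis
    proof (cases "b = snd (?ps ! i)")
      case False
      then have "A $$ (i,b) = 0" using off[OF j] side bj unfolding pg_edge_def by auto
      then show ?thesis using True False i b a by simp
    qed (use True diag i b a in simp)
  next
    case False
    then have "b \<noteq> snd (?ps ! i)" using i by auto
    then show ?thesis using False i b a by auto
  qed
qed

lemma fitting_matrix_of_cl_broadcast_solution: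
  assumes EIC: "EIC_problem n m R B" and sol: "cl_broadcast_solution R B h \<beta>"
  shows "\<exists>A' \<in> col_rep_image R. fits R B A' \<and> rk2 A' \<le> h"
proof -
  let ?k = "length (req_pairs R)"
  have R: "dim_col R = m" and B: "dim_col B = m" using EIC unfolding EIC_problem_def by auto
  have \<beta>: "\<beta> \<in> carrier_mat h m" using sol R unfolding cl_broadcast_solution_def by simp
  obtain \<Gamma> where \<Gamma>: "\<Gamma> \<in> carrier_mat ?k h" and dec: "decoding_matrix R B (\<Gamma> * \<beta>)"
    using sol cl_broadcast_solution_iff_decoding_matrix[OF R B \<beta>] by blast
  define X where "X = mat h ?k (\<lambda>(l,j). \<beta> $$ (l, snd (req_pairs R ! j)))"
  have X: "X \<in> carrier_mat h ?k" unfolding X_def by simp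
  have "col_rep R (\<Gamma> * \<beta>) = \<Gamma> * X"
    unfolding X_def using col_rep_mult[OF \<Gamma>] \<beta> R by simp
  then have "rk2 (col_rep R (\<Gamma> * \<beta>)) \<le> h"
    unfolding rk2_def using \<Gamma> vec_space.rank_mult_le[OF \<Gamma> X] by simp
  moreover have "col_rep R (\<Gamma> * \<beta>) \<in> col_rep_image R"
    using \<Gamma> \<beta> R unfolding col_rep_image_def by auto
  moreover have "fits R B (col_rep R (\<Gamma> * \<beta>))"
    using fits_col_rep_if_decoding_matrix[OF EIC dec] .
  ultimately show ?thesis by auto
qed

lemma cl_broadcast_solution_of_fitting_matrix:
  assumes B: "dim_col B = dim_col R" and A': "A' \<in> col_rep_image R" and fit: "fits R B A'"
  shows "\<exists>\<beta>. cl_broadcast_solution R B (rk2 A') \<beta>"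
proof -
  let ?ps = "req_pairs R" and ?m = "dim_col R"
  let ?k = "length ?ps"
  let ?used = "\<lambda>b. \<exists>j < ?k. snd (?ps ! j) = b"
  obtain A where A: "A' = col_rep R A" using A' unfolding col_rep_image_def by blast
  have A'k: "A' \<in> carrier_mat ?k ?k" unfolding A by (rule col_rep_carrier)
  have rk: "vec_space.rank ?k A' = rk2 A'" unfolding rk2_def using A'k by simp
  obtain \<Gamma> X where \<Gamma>: "\<Gamma> \<in> carrier_mat ?k (rk2 A')" and X: "X \<in> carrier_mat (rk2 A') ?k"
    and A'_eq: "A' = \<Gamma> * X"
    using vec_space.rank_factorization[OF A'k] unfolding rk .
  define rep where "rep b = (SOME j. j < ?k \<and> snd (?ps ! j) = b)" for b
  have rep: "rep b < ?k" "snd (?ps ! rep b) = b" if "?used b" for b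
  proof -
    from that obtain j where "j < ?k \<and> snd (?ps ! j) = b" by blast
    then have "rep b < ?k \<and> snd (?ps ! rep b) = b" unfolding rep_def by (rule someI)
    then show "rep b < ?k" "snd (?ps ! rep b) = b" by simp_all
  qed
  define \<beta> where "\<beta> = mat (rk2 A') ?m (\<lambda>(l,b). if ?used b then X $$ (l, rep b) else 0)"
  have \<beta>: "\<beta> \<in> carrier_mat (rk2 A') ?m" unfolding \<beta>_def by simp
  have col_\<beta>: "col \<beta> b = (if ?used b then col X (rep b) else 0\<^sub>v (rk2 A'))" if "b < ?m" for b
  proof (cases "?used b")
    case True
    then show ?thesis unfolding \<beta>_def using that X rep(1)[OF True] by (intro eq_vecI) auto
  next
    case False
    then show ?thesis unfolding \<beta>_def using that by (intro eq_vecI) (simp_all add: False)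
  qed
  have "\<Gamma> * \<beta> = mat ?k ?m (\<lambda>(i,b). if ?used b then A $$ (i,b) else 0)" (is "_ = ?M")
  proof (rule eq_matI)
    fix i b assume "i < dim_row ?M" and "b < dim_col ?M"
    then have i: "i < ?k" and b: "b < ?m" by simp_all
    have "(\<Gamma> * \<beta>) $$ (i,b) = row \<Gamma> i \<bullet> col \<beta> b" using \<Gamma> \<beta> i b by simp
    also have "\<dots> = (if ?used b then A' $$ (i, rep b) else 0)"
      using \<Gamma> X i rep(1) unfolding col_\<beta>[OF b] A'_eq by auto
    also have "\<dots> = ?M $$ (i,b)"
      using i b rep unfolding A by (auto simp: col_rep_index)
    finally show "(\<Gamma> * \<beta>) $$ (i,b) = ?M $$ (i,b)" .
  qed (use \<Gamma> \<beta> in auto)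
  then have "decoding_matrix R B (\<Gamma> * \<beta>)"
    using decoding_matrix_if_fits_col_rep[OF fit[unfolded A]] by simp
  then show ?thesis
    using cl_broadcast_solution_iff_decoding_matrix[OF refl B \<beta>] \<Gamma> by blast
qed

theorem theorem2:
  fixes n m :: nat and R B :: "bit mat"
  assumes "0 < n" and "0 < m"
    and "EIC_problem n m R B"
  shows "min_broadcast_length R B = rminrk R B"
proof -
  let ?P = "\<lambda>h. \<exists>\<beta>. cl_broadcast_solution R B h \<beta>"
  let ?Q = "\<lambda>r. \<exists>A' \<in> col_rep_image R. fits R B A' \<and> rk2 A' = r"
  have R: "dim_col R = m" and B: "dim_col B = m" using assms(3) unfolding EIC_problem_def by auto
  have "?P m" using cl_broadcast_solution_one_mat[OF R B] by blast
  then have "?P (min_broadcast_length R B)" unfolding min_broadcast_length_def by (rule LeastI)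
  then obtain A' where A': "A' \<in> col_rep_image R" "fits R B A'" "rk2 A' \<le> min_broadcast_length R B"
    using fitting_matrix_of_cl_broadcast_solution[OF assms(3)] by blast
  then have "?Q (rk2 A')" by blast
  then have "rminrk R B \<le> rk2 A'" and "?Q (rminrk R B)"
    unfolding rminrk_def by (rule Least_le, rule LeastI)
  moreover from \<open>?Q (rminrk R B)\<close> obtain A'' where
    "A'' \<in> col_rep_image R" "fits R B A''" "rk2 A'' = rminrk R B" by blast
  then have "?P (rminrk R B)" using cl_broadcast_solution_of_fitting_matrix[of B R A''] R B by simp
  then have "min_broadcast_length R B \<le> rminrk R B"
    unfolding min_broadcast_length_def by (rule Least_le)
  ultimately show ?thesis using A'(3) by linarith
qed

end
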